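(* Let $M$ be an $N\times N$ and $N_0$ an $r\times N$ complex matrix. If the series $\sum_{m=0}^\infty N_0M^m$ converges, then $N_0M^m=N_0\widetilde M^m$ for every $m\ge0$.
   Context: For a square complex matrix $M$ with Jordan decomposition $M=SJS^{-1}$, where $S$ is nonsingular and $J=\mathrm{diag}(J_{n_1}(\lambda_1),\dots,J_{n_k}(\lambda_k))$ with $J_{n_i}(\lambda_i)$ the $n_i\times n_i$ Jordan block for eigenvalue $\lambda_i$, define $\widetilde M=S\widetilde JS^{-1}$, where $\widetilde J=\mathrm{diag}(J^1,\dots,J^k)$ with $J^i=0_{n_i\times n_i}$ if $|\lambda_i|\ge1$ and $J^i=J_{n_i}(\lambda_i)$ otherwise. *)

theory Defs
  imports "Jordan_Normal_Form.Jordan_Normal_Form" Complex_Main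
begin

definition trunc_jordan_matrix :: "(nat \<times> complex) list \<Rightarrow> complex mat" where
  "trunc_jordan_matrix n_as =
     diag_block_mat (map (\<lambda>(n, a). if cmod a \<ge> 1 then 0\<^sub>m n n else jordan_block n a) n_as)"

text \<open>Given a Jordan decomposition M = S * jordan_matrix n_as * Sinv (with Sinv the inverse
  of S), the matrix M-tilde = S * J-tilde * Sinv.\<close>
definition mtilde :: "complex mat \<Rightarrow> complex mat \<Rightarrow> (nat \<times> complex) list \<Rightarrow> complex mat" where
  "mtilde S Sinv n_as = S * trunc_jordan_matrix n_as * Sinv"

definition mat_series_converges :: "nat \<Rightarrow> nat \<Rightarrow> (nat \<Rightarrow> complex mat) \<Rightarrow> bool" where
  "mat_series_converges r c f \<longleftrightarrow> (\<forall>i<r. \<forall>j<c. summable (\<lambda>m. f m $$ (i, j)))"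

end

theory Submission imports Defs begin

(* Write M = S J S^-1 with J = jordan_matrix n_as, and put P = N0 S.
   Convergence of the series forces its terms N0 M^m to tend to 0, hence so do
   N0 M^m S = P J^m.  Since J is block diagonal, the columns of P split into
   column blocks P_k with P_k J_k^m -> 0 for every Jordan block J_k = J_{n_k}(a_k).
   If |a_k| >= 1 then P_k = 0: in each row of P_k, the entry of P_k J_k^m in the
   column of the first nonzero entry p equals p a_k^m, which does not tend to 0.
   Hence P J^m = P J~^m, where J~ replaces these blocks by zero blocks, and
   conjugating back with S^-1 gives N0 M^m = N0 M~^m. *)

definition mat_seq_vanishes :: "nat \<Rightarrow> nat \<Rightarrow> (nat \<Rightarrow> 'a::real_normed_vector mat) \<Rightarrow> bool" where
  "mat_seq_vanishes r c f \<longleftrightarrow> (\<forall>i<r. \<forall>j<c. (\<lambda>m. f m $$ (i, j)) \<longlonglongrightarrow> 0)"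

lemma mat_series_converges_vanishes:
  "mat_series_converges r c f \<Longrightarrow> mat_seq_vanishes r c f"
  unfolding mat_series_converges_def mat_seq_vanishes_def by (blast intro: summable_LIMSEQ_zero)

lemma mat_seq_vanishes_mult_right:
  fixes f :: "nat \<Rightarrow> 'a::real_normed_algebra mat"
  assumes f: "\<And>m. f m \<in> carrier_mat r n" and van: "mat_seq_vanishes r n f"
    and A: "A \<in> carrier_mat n c"
  shows "mat_seq_vanishes r c (\<lambda>m. f m * A)"
  unfolding mat_seq_vanishes_def
proof (intro allI impI)
  fix i j assume ij: "i < r" "j < c"
  have entry: "(f m * A) $$ (i, j) = (\<Sum>k\<in>{0..<n}. f m $$ (i, k) * A $$ (k, j))" for m
    using f[of m] A ij by (simp add: scalar_prod_def)
  have "(\<lambda>m. f m $$ (i, k)) \<longlonglongrightarrow> 0" if "k < n" for k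
    using van ij that unfolding mat_seq_vanishes_def by blast
  then show "(\<lambda>m. (f m * A) $$ (i, j)) \<longlonglongrightarrow> 0"
    unfolding entry by (intro tendsto_null_sum) (auto intro: tendsto_mult_left_zero)
qed

text \<open>By upper triangularity of powers of a Jordan block, the entry of P J^m in the
  column of the first nonzero entry of a row of P only sees that entry and the diagonal.\<close>
lemma jordan_block_pow_leading_entry:
  fixes P :: "'a::comm_ring_1 mat"
  assumes P: "P \<in> carrier_mat r n" and i: "i < r" and j: "j < n"
    and before: "\<And>k. k < j \<Longrightarrow> P $$ (i, k) = 0"
  shows "(P * jordan_block n a ^\<^sub>m m) $$ (i, j) = P $$ (i, j) * a ^ m"
proof -
  let ?u = "\<lambda>k. P $$ (i, k) * (if k \<le> j then of_nat (m choose (j - k)) * a ^ (m + k - j) else 0)"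
  have "(P * jordan_block n a ^\<^sub>m m) $$ (i, j) = (\<Sum>k\<in>{0..<n}. ?u k)"
    using P i j by (simp add: jordan_block_pow scalar_prod_def)
  also have "\<dots> = ?u j + (\<Sum>k\<in>{0..<n}-{j}. ?u k)"
    using j by (subst sum.remove[of _ j]) auto
  also have "(\<Sum>k\<in>{0..<n}-{j}. ?u k) = 0"
    using before by (intro sum.neutral) auto
  finally show ?thesis by simp
qed

lemma jordan_block_orbit_vanishes_imp_zero:
  fixes P :: "'a::real_normed_field mat"
  assumes P: "P \<in> carrier_mat r n" and a: "norm a \<ge> 1"
    and van: "mat_seq_vanishes r n (\<lambda>m. P * jordan_block n a ^\<^sub>m m)"
  shows "P = 0\<^sub>m r n"
proof (rule ccontr)
  assume "P \<noteq> 0\<^sub>m r n"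
  then obtain i j where ij: "i < r" "j < n" "P $$ (i, j) \<noteq> 0"
    using P by (metis carrier_matD(1,2) eq_matI index_zero_mat(1,2,3))
  define j0 where "j0 = (LEAST j. j < n \<and> P $$ (i, j) \<noteq> 0)"
  have j0: "j0 < n" "P $$ (i, j0) \<noteq> 0"
    using LeastI[of "\<lambda>j. j < n \<and> P $$ (i, j) \<noteq> 0"] ij unfolding j0_def by auto
  have before: "P $$ (i, k) = 0" if "k < j0" for k
    using not_less_Least[of k "\<lambda>j. j < n \<and> P $$ (i, j) \<noteq> 0"] that j0(1)
    unfolding j0_def by auto
  have "(\<lambda>m. (P * jordan_block n a ^\<^sub>m m) $$ (i, j0)) \<longlonglongrightarrow> 0"
    using van ij(1) j0(1) unfolding mat_seq_vanishes_def by blast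
  then have "(\<lambda>m. P $$ (i, j0) * a ^ m) \<longlonglongrightarrow> 0"
    by (simp add: jordan_block_pow_leading_entry[OF P ij(1) j0(1) before])
  hence "(\<lambda>m. norm (P $$ (i, j0) * a ^ m)) \<longlonglongrightarrow> 0"
    by (simp add: tendsto_norm_zero)
  moreover have "norm (P $$ (i, j0)) \<le> norm (P $$ (i, j0) * a ^ m)" for m
    using a by (simp add: norm_mult norm_power mult_le_cancel_left1 one_le_power)
  ultimately have "norm (P $$ (i, j0)) \<le> 0"
    by (intro tendsto_le[OF sequentially_bot _ tendsto_const]) auto
  thus False using j0(2) by simp
qed

lemma trunc_jordan_matrix_carrier:
  "trunc_jordan_matrix n_as \<in> carrier_mat (sum_list (map fst n_as)) (sum_list (map fst n_as))"
  unfolding trunc_jordan_matrix_def by (induct n_as) (auto simp: Let_def)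

lemma trunc_jordan_matrix_Cons:
  "trunc_jordan_matrix ((n, a) # rest) =
    four_block_mat (if cmod a \<ge> 1 then 0\<^sub>m n n else jordan_block n a)
      (0\<^sub>m n (sum_list (map fst rest))) (0\<^sub>m (sum_list (map fst rest)) n) (trunc_jordan_matrix rest)"
  using trunc_jordan_matrix_carrier[of rest] unfolding trunc_jordan_matrix_def by (auto simp: Let_def)

lemma jordan_matrix_Cons:
  "jordan_matrix ((n, a) # rest) =
    four_block_mat (jordan_block n a)
      (0\<^sub>m n (sum_list (map fst rest))) (0\<^sub>m (sum_list (map fst rest)) n) (jordan_matrix rest)"
  using jordan_matrix_carrier[of rest] unfolding jordan_matrix_def by (auto simp: Let_def)

lemma mult_block_diag_mat:
  fixes P X Y :: "'a::comm_ring_1 mat"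
  assumes P: "P \<in> carrier_mat r (n + n')" and X: "X \<in> carrier_mat n n" and Y: "Y \<in> carrier_mat n' n'"
  shows "P * four_block_mat X (0\<^sub>m n n') (0\<^sub>m n' n) Y =
    four_block_mat (mat r n (\<lambda>(i, j). P $$ (i, j)) * X) (mat r n' (\<lambda>(i, j). P $$ (i, j + n)) * Y)
      (0\<^sub>m 0 n) (0\<^sub>m 0 n')"
proof -
  have "P = four_block_mat (mat r n (\<lambda>(i, j). P $$ (i, j))) (mat r n' (\<lambda>(i, j). P $$ (i, j + n)))
      (0\<^sub>m 0 n) (0\<^sub>m 0 n')"
    using P by (intro eq_matI) auto
  also have "\<dots> * four_block_mat X (0\<^sub>m n n') (0\<^sub>m n' n) Y =
    four_block_mat (mat r n (\<lambda>(i, j). P $$ (i, j)) * X) (mat r n' (\<lambda>(i, j). P $$ (i, j + n)) * Y)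
      (0\<^sub>m 0 n) (0\<^sub>m 0 n')"
    using X Y by (subst mult_four_block_mat[of _ r n _ n' _ 0 _ _ n _ n']) auto
  finally show ?thesis .
qed

lemma vanishing_orbit_trunc_jordan:
  fixes P :: "complex mat"
  assumes "P \<in> carrier_mat r (sum_list (map fst n_as))"
    and "mat_seq_vanishes r (sum_list (map fst n_as)) (\<lambda>m. P * jordan_matrix n_as ^\<^sub>m m)"
  shows "P * jordan_matrix n_as ^\<^sub>m m = P * trunc_jordan_matrix n_as ^\<^sub>m m"
  using assms
proof (induct n_as arbitrary: P m)
  case Nil
  then show ?case by (simp add: trunc_jordan_matrix_def jordan_matrix_def)
next
  case (Cons na rest)
  obtain n a where na: "na = (n, a)" by force
  define n' where "n' = sum_list (map fst rest)"
  define P1 where "P1 = mat r n (\<lambda>(i, j). P $$ (i, j))"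
  define P2 where "P2 = mat r n' (\<lambda>(i, j). P $$ (i, j + n))"
  define B where "B = (if cmod a \<ge> 1 then 0\<^sub>m n n else jordan_block n a)"
  have P: "P \<in> carrier_mat r (n + n')" using Cons(2) unfolding na n'_def by simp
  have P1: "P1 \<in> carrier_mat r n" and P2: "P2 \<in> carrier_mat r n'" unfolding P1_def P2_def by auto
  have B: "B \<in> carrier_mat n n" unfolding B_def by auto
  have J': "jordan_matrix rest \<in> carrier_mat n' n'" unfolding n'_def by simp
  have T': "trunc_jordan_matrix rest \<in> carrier_mat n' n'"
    unfolding n'_def by (rule trunc_jordan_matrix_carrier)
  have PJ: "P * jordan_matrix (na # rest) ^\<^sub>m k =
      four_block_mat (P1 * jordan_block n a ^\<^sub>m k) (P2 * jordan_matrix rest ^\<^sub>m k) (0\<^sub>m 0 n) (0\<^sub>m 0 n')" for k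
    unfolding na jordan_matrix_Cons n'_def[symmetric] P1_def P2_def
    using P J' by (simp add: pow_four_block_mat mult_block_diag_mat)
  have PT: "P * trunc_jordan_matrix (na # rest) ^\<^sub>m k =
      four_block_mat (P1 * B ^\<^sub>m k) (P2 * trunc_jordan_matrix rest ^\<^sub>m k) (0\<^sub>m 0 n) (0\<^sub>m 0 n')" for k
    unfolding na trunc_jordan_matrix_Cons n'_def[symmetric] B_def[symmetric] P1_def P2_def
    using P B T' by (simp add: pow_four_block_mat mult_block_diag_mat)
  have van: "\<And>i j. i < r \<Longrightarrow> j < n + n' \<Longrightarrow> (\<lambda>m. (P * jordan_matrix (na # rest) ^\<^sub>m m) $$ (i, j)) \<longlonglongrightarrow> 0"
    using Cons(3) unfolding mat_seq_vanishes_def na n'_def by simp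
  have van1: "mat_seq_vanishes r n (\<lambda>m. P1 * jordan_block n a ^\<^sub>m m)"
    unfolding mat_seq_vanishes_def
  proof (intro allI impI)
    fix i j assume ij: "i < r" "j < n"
    have "(P * jordan_matrix (na # rest) ^\<^sub>m m) $$ (i, j) = (P1 * jordan_block n a ^\<^sub>m m) $$ (i, j)" for m
      unfolding PJ using ij P1 P2 J' by simp
    with van[of i j] ij show "(\<lambda>m. (P1 * jordan_block n a ^\<^sub>m m) $$ (i, j)) \<longlonglongrightarrow> 0" by simp
  qed
  have van2: "mat_seq_vanishes r n' (\<lambda>m. P2 * jordan_matrix rest ^\<^sub>m m)"
    unfolding mat_seq_vanishes_def
  proof (intro allI impI)
    fix i j assume ij: "i < r" "j < n'"
    have "(P * jordan_matrix (na # rest) ^\<^sub>m m) $$ (i, j + n) = (P2 * jordan_matrix rest ^\<^sub>m m) $$ (i, j)" for m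
      unfolding PJ using ij P1 P2 J' by simp
    with van[of i "j + n"] ij show "(\<lambda>m. (P2 * jordan_matrix rest ^\<^sub>m m) $$ (i, j)) \<longlonglongrightarrow> 0" by simp
  qed
  have tail: "P2 * jordan_matrix rest ^\<^sub>m m = P2 * trunc_jordan_matrix rest ^\<^sub>m m"
    using Cons(1) P2 van2 unfolding n'_def by blast
  have head: "P1 * jordan_block n a ^\<^sub>m m = P1 * B ^\<^sub>m m"
  proof (cases "cmod a \<ge> 1")
    case True
    then have "P1 = 0\<^sub>m r n"
      using jordan_block_orbit_vanishes_imp_zero[OF P1 _ van1] by simp
    then show ?thesis using B by simp
  qed (simp add: B_def)
  show ?case unfolding PJ PT head tail ..
qed

lemma similar_mat_wit_orbit:
  assumes sim: "similar_mat_wit A B S Sinv" and A: "A \<in> carrier_mat n n" and X: "X \<in> carrier_mat r n"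
  shows "X * A ^\<^sub>m m = X * S * B ^\<^sub>m m * Sinv"
    and "X * A ^\<^sub>m m * S = X * S * B ^\<^sub>m m"
proof -
  have B: "B \<in> carrier_mat n n" and S: "S \<in> carrier_mat n n" and Sinv: "Sinv \<in> carrier_mat n n"
    and inv: "Sinv * S = 1\<^sub>m n"
    using similar_mat_witD2[OF A sim] by auto
  have Bm: "B ^\<^sub>m m \<in> carrier_mat n n" using B by simp
  show eq: "X * A ^\<^sub>m m = X * S * B ^\<^sub>m m * Sinv"
    unfolding similar_mat_wit_pow_id[OF sim] using X S Sinv Bm by (simp add: assoc_mult_mat[of _ r n _ n _ n])
  have "X * A ^\<^sub>m m * S = X * S * B ^\<^sub>m m * Sinv * S"
    unfolding eq ..
  also have "\<dots> = X * S * B ^\<^sub>m m * (Sinv * S)"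
    using X S Sinv Bm by (intro assoc_mult_mat[of _ r n _ n _ n]) auto
  also have "\<dots> = X * S * B ^\<^sub>m m"
    unfolding inv using X S Bm by (metis mult_carrier_mat right_mult_one_mat)
  finally show "X * A ^\<^sub>m m * S = X * S * B ^\<^sub>m m" .
qed

theorem lemmaA1:
  fixes M N0 S Sinv :: "complex mat" and n_as :: "(nat \<times> complex) list" and N r :: nat
  assumes "M \<in> carrier_mat N N"
    and "N0 \<in> carrier_mat r N"
    and "similar_mat_wit M (jordan_matrix n_as) S Sinv"
    and "mat_series_converges r N (\<lambda>m. N0 * M ^\<^sub>m m)"
  shows "\<forall>m. N0 * M ^\<^sub>m m = N0 * (mtilde S Sinv n_as) ^\<^sub>m m"
proof
  fix m
  note sim = assms(3) and M = assms(1) and N0 = assms(2)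
  let ?J = "jordan_matrix n_as" and ?T = "trunc_jordan_matrix n_as" and ?P = "N0 * S"
  have J: "?J \<in> carrier_mat N N" and S: "S \<in> carrier_mat N N" and Sinv: "Sinv \<in> carrier_mat N N"
    and SSinv: "S * Sinv = 1\<^sub>m N" and SinvS: "Sinv * S = 1\<^sub>m N"
    using similar_mat_witD2[OF M sim] by blast+
  have blocks: "sum_list (map fst n_as) = N" using J by auto
  have T: "?T \<in> carrier_mat N N"
    using trunc_jordan_matrix_carrier[of n_as] unfolding blocks .
  have Mtilde: "mtilde S Sinv n_as \<in> carrier_mat N N"
    unfolding mtilde_def using S T Sinv by simp
  have sim_tilde: "similar_mat_wit (mtilde S Sinv n_as) ?T S Sinv"
    by (rule similar_mat_witI[OF SSinv SinvS mtilde_def Mtilde T S Sinv])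
  have "mat_seq_vanishes r N (\<lambda>m. N0 * M ^\<^sub>m m * S)"
    using N0 M by (intro mat_seq_vanishes_mult_right[OF _ mat_series_converges_vanishes[OF assms(4)] S]) simp
  then have van: "mat_seq_vanishes r N (\<lambda>m. ?P * ?J ^\<^sub>m m)"
    unfolding similar_mat_wit_orbit(2)[OF sim M N0] .
  have P: "?P \<in> carrier_mat r (sum_list (map fst n_as))"
    unfolding blocks using N0 S by simp
  have orbit_trunc: "?P * ?J ^\<^sub>m m = ?P * ?T ^\<^sub>m m"
    by (rule vanishing_orbit_trunc_jordan[OF P van[folded blocks]])
  have "N0 * M ^\<^sub>m m = ?P * ?J ^\<^sub>m m * Sinv"
    by (rule similar_mat_wit_orbit(1)[OF sim M N0])
  also have "\<dots> = ?P * ?T ^\<^sub>m m * Sinv"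
    by (simp only: orbit_trunc)
  also have "\<dots> = N0 * (mtilde S Sinv n_as) ^\<^sub>m m"
    by (rule similar_mat_wit_orbit(1)[OF sim_tilde Mtilde N0, symmetric])
  finally show "N0 * M ^\<^sub>m m = N0 * (mtilde S Sinv n_as) ^\<^sub>m m" .
qed

end
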